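(* Let $\{\mathcal{S}(t)\}_{t\ge0}$ be an NGSP and let $p(n,t)=P(\mathcal{S}(t)=n)$ for $n\in\mathbb{Z}$, $t\ge0$. Then for every $t\ge0$ and every integer $n\ge1$, $$p(n,t)=\frac{1}{n}\sum_{j=1}^{k}j\left(\Lambda_{j}(t)\,p(n-j,t)-T_{j}(t)\,p(n+j,t)\right).$$
   Context: Fix $k\in\mathbb{N}$. Given locally integrable functions $\lambda_j:[0,\infty)\to[0,\infty)$, $j=1,\dots,k$, with $\Lambda_j(t)=\int_0^t\lambda_j(u)\,du<\infty$ and $\Lambda_j(s,t)=\Lambda_j(t)-\Lambda_j(s)$, a non-homogeneous generalized counting process (NGCP) with intensities $\lambda_1,\dots,\lambda_k$ is a process $\{\mathcal{M}(t)\}_{t\ge0}$ with $\mathcal{M}(0)=0$, independent increments, and $\mathbb{E}[u^{\mathcal{M}(t)-\mathcal{M}(s)}]=\exp\left(\sum_{j=1}^k\Lambda_j(s,t)(u^j-1)\right)$ for $0\le s<t$. The non-homogeneous generalized Skellam process (NGSP) is $\mathcal{S}(t)=\mathcal{M}_1(t)-\mathcal{M}_2(t)$, where $\mathcal{M}_1,\mathcal{M}_2$ are independent NGCPs with intensities $\lambda_j$ and $\gamma_j$ ($j=1,\dots,k$) respectively, with cumulative functions $\Lambda_j(t)=\int_0^t\lambda_j$ and $T_j(t)=\int_0^t\gamma_j$. *)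

theory Defs
  imports "HOL-Probability.Probability"
begin

definition cumint :: "(real \<Rightarrow> real) \<Rightarrow> real \<Rightarrow> real" where
  "cumint f t = integral {0..t} f"

definition NGCP :: "'a measure \<Rightarrow> nat \<Rightarrow> (nat \<Rightarrow> real \<Rightarrow> real) \<Rightarrow> (real \<Rightarrow> 'a \<Rightarrow> nat) \<Rightarrow> bool" where
  "NGCP M k lam X \<longleftrightarrow>
     (\<forall>t\<ge>0. X t \<in> measurable M (count_space UNIV)) \<and>
     (\<forall>\<omega>\<in>space M. X 0 \<omega> = 0) \<and>
     (\<forall>(n::nat) (ts::nat \<Rightarrow> real). 0 \<le> ts 0 \<and> (\<forall>i<n. ts i < ts (Suc i)) \<longrightarrow>
        prob_space.indep_vars M (\<lambda>_. count_space (UNIV::int set))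
          (\<lambda>i \<omega>. int (X (ts (Suc i)) \<omega>) - int (X (ts i) \<omega>)) {..<n}) \<and>
     (\<forall>s t (u::real). 0 \<le> s \<and> s < t \<and> \<bar>u\<bar> \<le> 1 \<longrightarrow>
        (\<integral>\<omega>. u powi (int (X t \<omega>) - int (X s \<omega>)) \<partial>M)
          = exp (\<Sum>j=1..k. (cumint (lam j) t - cumint (lam j) s) * (u ^ j - 1)))"

end

theory Submission imports Defs begin

text \<open>The probability generating function of a counting process at time \<open>t\<close> is
  \<open>G(z) = exp (\<Sum>j. \<Lambda>\<^sub>j(t) (z^j - 1))\<close>. Comparing coefficients in \<open>G' = G \<cdot> (\<Sum>j. j \<Lambda>\<^sub>j(t) z^(j-1))\<close>
  gives the recursion \<open>m q(m) = \<Sum>j. j \<Lambda>\<^sub>j(t) q(m - j)\<close> for its distribution \<open>q\<close>.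
  By independence the distribution of the difference is the correlation
  \<open>p(n) = \<Sum>m. q\<^sub>1(n + m) q\<^sub>2(m)\<close>; writing \<open>n = (n + m) - m\<close> and applying the recursion of
  \<open>q\<^sub>1\<close> to the first term and that of \<open>q\<^sub>2\<close> to the second yields the theorem after
  shifting \<open>m\<close> by \<open>j\<close> in the second sum.\<close>

lemma powser_sums_zero_imp_coeff_zero:
  fixes c :: "nat \<Rightarrow> real"
  assumes r: "0 < r" and sums_zero: "\<And>x. \<bar>x\<bar> < r \<Longrightarrow> (\<lambda>n. c n * x ^ n) sums 0"
  shows "c m = 0"
proof -
  have "\<forall>i<N. c i = 0" for N
  proof (induction N)
    case 0
    then show ?case by simp
  next
    case (Suc m)
    have tail: "(\<lambda>n. c (n + m) * x ^ n) sums 0" if "x \<noteq> 0" "norm x < r" for x :: real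
    proof -
      have "(\<lambda>n. c (n + m) * x ^ (n + m)) sums 0"
        using sums_zero_iff_shift[of m "\<lambda>n. c n * x ^ n" 0] sums_zero Suc.IH that by simp
      then have "(\<lambda>n. inverse (x ^ m) * (c (n + m) * x ^ (n + m))) sums 0"
        using sums_mult by fastforce
      then show ?thesis
        using that by (simp add: power_add field_simps)
    qed
    have "((\<lambda>_::real. 0::real) \<longlongrightarrow> c m) (at 0)"
      using powser_limit_0_strong[OF r, of "\<lambda>n. c (n + m)" "\<lambda>_. 0"] tail by simp
    then have "0 = c m"
      by (rule LIM_const_eq)
    with Suc.IH show ?case
      by (auto simp: less_Suc_eq)
  qed
  then show ?thesis
    by blast
qed

lemma powser_shift_sums:
  fixes a :: "nat \<Rightarrow> real"
  assumes "(\<lambda>n. a n * z ^ n) sums s" and "1 \<le> j"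
  shows "(\<lambda>n. (if j \<le> Suc n then a (Suc n - j) else 0) * z ^ n) sums (z ^ (j - 1) * s)"
proof -
  obtain d where j: "j = Suc d"
    using \<open>1 \<le> j\<close> by (cases j) auto
  have "(\<lambda>n. z ^ d * (a n * z ^ n)) sums (z ^ d * s)"
    by (rule sums_mult) fact
  moreover have "z ^ d * (a i * z ^ i) = (if j \<le> Suc (i + d) then a (Suc (i + d) - j) else 0) * z ^ (i + d)"
    for i
    by (simp add: j power_add)
  ultimately show ?thesis
    by (subst sums_zero_iff_shift[of d, symmetric]) (auto simp: j)
qed

lemma exp_poly_powser_coeff_recursion:
  fixes a L :: "nat \<Rightarrow> real"
  assumes sums_exp: "\<And>z. \<bar>z\<bar> < 1 \<Longrightarrow> (\<lambda>n. a n * z ^ n) sums exp (\<Sum>j\<in>{1..k}. L j * (z ^ j - 1))"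
  shows "real (Suc n) * a (Suc n) =
     (\<Sum>j\<in>{1..k}. L j * real j * (if j \<le> Suc n then a (Suc n - j) else 0))"
proof -
  define h where "h z = (\<Sum>j\<in>{1..k}. L j * (z ^ j - 1))" for z :: real
  define h' where "h' z = (\<Sum>j\<in>{1..k}. L j * (real j * z ^ (j - 1)))" for z :: real
  define b where "b n = (\<Sum>j\<in>{1..k}. L j * real j * (if j \<le> Suc n then a (Suc n - j) else 0))" for n
  have "(h has_field_derivative h' z) (at z)" for z
    unfolding h_def h'_def by (auto intro!: derivative_eq_intros DERIV_sum)
  then have "((\<lambda>z. exp (h z)) has_field_derivative (exp (h z) * h' z)) (at z)" for z
    by (auto intro!: derivative_eq_intros)
  then have diffs_sums: "(\<lambda>n. diffs a n * z ^ n) sums (exp (h z) * h' z)" if "\<bar>z\<bar> < 1" for z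
    by (intro termdiffs_sums_strong[where K = 1 and f = "\<lambda>z. exp (h z)"])
       (use sums_exp that in \<open>auto simp: h_def\<close>)
  have b_sums: "(\<lambda>n. b n * z ^ n) sums (exp (h z) * h' z)" if "\<bar>z\<bar> < 1" for z
  proof -
    have "(\<lambda>n. \<Sum>j\<in>{1..k}. L j * real j * ((if j \<le> Suc n then a (Suc n - j) else 0) * z ^ n))
          sums (\<Sum>j\<in>{1..k}. L j * real j * (z ^ (j - 1) * exp (h z)))"
      using sums_exp that by (intro sums_sum sums_mult powser_shift_sums) (auto simp: h_def)
    then show ?thesis
      by (simp add: b_def h'_def sum_distrib_left sum_distrib_right mult_ac)
  qed
  have "(\<lambda>n. (diffs a n - b n) * z ^ n) sums 0" if "\<bar>z\<bar> < 1" for z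
    using sums_diff[OF diffs_sums[OF that] b_sums[OF that]] by (simp add: left_diff_distrib)
  then have "diffs a n - b n = 0"
    by (intro powser_sums_zero_imp_coeff_zero[of 1]) auto
  then show ?thesis
    by (simp add: diffs_def b_def)
qed

lemma pgf_powser_sums:
  fixes X :: "'a \<Rightarrow> nat" and z :: real
  assumes "prob_space M" and X[measurable]: "X \<in> measurable M (count_space UNIV)"
    and z: "\<bar>z\<bar> < 1"
  shows "(\<lambda>n. measure M {\<omega>\<in>space M. X \<omega> = n} * z ^ n) sums (\<integral>\<omega>. z ^ (X \<omega>) \<partial>M)"
proof -
  interpret prob_space M by fact
  define f where "f n \<omega> = z ^ n * indicator {\<omega>\<in>space M. X \<omega> = n} \<omega>" for n \<omega>
  have f_single: "f n \<omega> = (if n = X \<omega> then z ^ n else 0)" if "\<omega> \<in> space M" for n \<omega>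
    using that by (auto simp: f_def)
  have integrable: "integrable M (f n)" for n
    unfolding f_def by (intro integrable_mult_right integrable_real_indicator) (auto simp: less_top[symmetric])
  have "(\<integral>\<omega>. norm (f n \<omega>) \<partial>M) = (\<integral>\<omega>. \<bar>z\<bar> ^ n * indicator {\<omega>\<in>space M. X \<omega> = n} \<omega> \<partial>M)"
    for n
    by (intro Bochner_Integration.integral_cong) (auto simp: f_def indicator_def power_abs)
  then have norm_integral: "(\<integral>\<omega>. norm (f n \<omega>) \<partial>M) = \<bar>z\<bar> ^ n * measure M {\<omega>\<in>space M. X \<omega> = n}"
    for n
    by simp
  have "AE \<omega> in M. summable (\<lambda>n. norm (f n \<omega>))"
  proof (rule AE_I2)
    fix \<omega>
    have "(\<lambda>n. norm (f n \<omega>)) = (\<lambda>n. if n = X \<omega> then norm (f n \<omega>) else 0)"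
      by (auto simp: f_def fun_eq_iff indicator_def)
    then show "summable (\<lambda>n. norm (f n \<omega>))"
      using sums_summable[OF sums_single] by metis
  qed
  moreover have "summable (\<lambda>n. \<integral>\<omega>. norm (f n \<omega>) \<partial>M)"
  proof (rule summable_comparison_test')
    show "summable (\<lambda>n. \<bar>z\<bar> ^ n)"
      using z by (intro summable_geometric) auto
    show "norm (\<integral>\<omega>. norm (f n \<omega>) \<partial>M) \<le> \<bar>z\<bar> ^ n" for n
      unfolding norm_integral by (simp add: abs_mult mult_left_le)
  qed
  ultimately have "(\<lambda>n. integral\<^sup>L M (f n)) sums (\<integral>\<omega>. (\<Sum>n. f n \<omega>) \<partial>M)"
    by (rule sums_integral[OF integrable])
  moreover have "(\<Sum>n. f n \<omega>) = z ^ (X \<omega>)" if "\<omega> \<in> space M" for \<omega>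
    using sums_unique[OF sums_single[of "X \<omega>" "\<lambda>n. z ^ n"]] that by (simp add: f_single)
  ultimately show ?thesis
    by (simp add: f_def mult.commute cong: Bochner_Integration.integral_cong)
qed

lemma cumint_0 [simp]: "cumint f 0 = 0"
  by (simp add: cumint_def)

lemma NGCP_pgf:
  assumes "prob_space M" and N: "NGCP M k lam X" and "0 \<le> t" and "\<bar>u\<bar> \<le> 1"
  shows "(\<integral>\<omega>. u ^ (X t \<omega>) \<partial>M) = exp (\<Sum>j\<in>{1..k}. cumint (lam j) t * (u ^ j - 1))"
proof (cases "t = 0")
  case True
  interpret prob_space M by fact
  have "(\<integral>\<omega>. u ^ (X t \<omega>) \<partial>M) = (\<integral>\<omega>. 1 \<partial>M)"
    using N True by (intro Bochner_Integration.integral_cong) (auto simp: NGCP_def)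
  then show ?thesis
    using True by (simp add: prob_space)
next
  case False
  with N have "(\<integral>\<omega>. u powi (int (X t \<omega>) - int (X 0 \<omega>)) \<partial>M)
      = exp (\<Sum>j=1..k. (cumint (lam j) t - cumint (lam j) 0) * (u ^ j - 1))"
    using \<open>0 \<le> t\<close> \<open>\<bar>u\<bar> \<le> 1\<close> unfolding NGCP_def by simp
  moreover have "(\<integral>\<omega>. u powi (int (X t \<omega>) - int (X 0 \<omega>)) \<partial>M) = (\<integral>\<omega>. u ^ (X t \<omega>) \<partial>M)"
    using N by (intro Bochner_Integration.integral_cong) (auto simp: NGCP_def)
  ultimately show ?thesis
    by simp
qed

lemma NGCP_distribution_recursion:
  assumes P: "prob_space M" and N: "NGCP M k lam X" and t: "0 \<le> t"
  shows "of_int m * measure M {\<omega>\<in>space M. int (X t \<omega>) = m} =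
     (\<Sum>j\<in>{1..k}. real j * cumint (lam j) t * measure M {\<omega>\<in>space M. int (X t \<omega>) = m - int j})"
proof -
  define q where "q m = measure M {\<omega>\<in>space M. int (X t \<omega>) = m}" for m
  define a where "a n = measure M {\<omega>\<in>space M. X t \<omega> = n}" for n
  have X: "X t \<in> measurable M (count_space UNIV)"
    using N t by (auto simp: NGCP_def)
  have "(\<lambda>n. a n * z ^ n) sums exp (\<Sum>j\<in>{1..k}. cumint (lam j) t * (z ^ j - 1))"
    if "\<bar>z\<bar> < 1" for z
    using pgf_powser_sums[OF P X that] NGCP_pgf[OF P N t, of z] that by (simp add: a_def)
  note recursion = exp_poly_powser_coeff_recursion[OF this]
  have q_nat: "q (int n) = a n" for n
    by (simp add: q_def a_def)
  have q_neg: "q m = 0" if "m < 0" for m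
    using that by (simp add: q_def)
  show ?thesis
  proof (cases "m \<le> 0")
    case True
    then have "of_int m * q m = 0" and "\<forall>j\<in>{1..k}. q (m - int j) = 0"
      using q_neg[of m] by (cases "m = 0"; auto intro: q_neg)+
    then show ?thesis
      by (simp add: q_def[symmetric])
  next
    case False
    then obtain n where n: "m = int (Suc n)"
      by (metis gr0_implies_Suc not_le pos_int_cases)
    have "(if j \<le> Suc n then a (Suc n - j) else 0) = q (m - int j)" for j
      using q_neg[of "m - int j"] q_nat[of "Suc n - j"] n by (auto simp: of_nat_diff)
    with recursion[of n] show ?thesis
      by (simp add: q_def[symmetric] q_nat[symmetric] n mult_ac)
  qed
qed

lemma (in prob_space) indep_var_eval:
  assumes "indep_var (Pi\<^sub>M I (\<lambda>_. count_space UNIV)) (\<lambda>\<omega>. \<lambda>s\<in>I. X s \<omega>)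
                     (Pi\<^sub>M I (\<lambda>_. count_space UNIV)) (\<lambda>\<omega>. \<lambda>s\<in>I. Y s \<omega>)"
    and "t \<in> I"
  shows "indep_var (count_space UNIV) (X t) (count_space UNIV) (Y t)"
proof -
  have "indep_var (count_space UNIV) ((\<lambda>f. f t) \<circ> (\<lambda>\<omega>. \<lambda>s\<in>I. X s \<omega>))
                  (count_space UNIV) ((\<lambda>f. f t) \<circ> (\<lambda>\<omega>. \<lambda>s\<in>I. Y s \<omega>))"
    by (intro indep_var_compose[OF assms(1)] measurable_component_singleton[OF assms(2)])
  moreover have "(\<lambda>f. f t) \<circ> (\<lambda>\<omega>. \<lambda>s\<in>I. X s \<omega>) = X t" "(\<lambda>f. f t) \<circ> (\<lambda>\<omega>. \<lambda>s\<in>I. Y s \<omega>) = Y t"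
    using \<open>t \<in> I\<close> by auto
  ultimately show ?thesis
    by simp
qed

lemma (in prob_space) indep_var_diff_has_sum:
  fixes X Y :: "'a \<Rightarrow> nat"
  assumes ind: "indep_var (count_space UNIV) X (count_space UNIV) Y"
  shows "((\<lambda>m. prob {\<omega>\<in>space M. int (X \<omega>) = c + m} * prob {\<omega>\<in>space M. int (Y \<omega>) = m})
           has_sum prob {\<omega>\<in>space M. int (X \<omega>) - int (Y \<omega>) = c}) UNIV"
proof -
  note [measurable] = indep_var_rv1[OF ind] indep_var_rv2[OF ind]
  define A where "A i = {\<omega>\<in>space M. int (X \<omega>) - int (Y \<omega>) = c \<and> Y \<omega> = i}" for i
  define f where "f m = prob {\<omega>\<in>space M. int (X \<omega>) = c + m} * prob {\<omega>\<in>space M. int (Y \<omega>) = m}"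
    for m
  have "range A \<subseteq> sets M"
    unfolding A_def by auto
  moreover have "disjoint_family A"
    unfolding A_def disjoint_family_on_def by auto
  moreover have "(\<Union>i. A i) = {\<omega> \<in> space M. int (X \<omega>) - int (Y \<omega>) = c}"
    unfolding A_def by auto
  ultimately have "(\<lambda>i. prob (A i)) sums prob {\<omega>\<in>space M. int (X \<omega>) - int (Y \<omega>) = c}"
    by (metis finite_measure_UNION)
  moreover have "prob (A i) = f (int i)" for i
  proof (cases "c + int i < 0")
    case True
    then have "A i = {}" and "{\<omega>\<in>space M. int (X \<omega>) = c + int i} = {}"
      by (auto simp: A_def)
    then show ?thesis
      by (simp only: f_def measure_empty mult_zero_left)
  next
    case False
    then obtain a where a: "c + int i = int a"
      by (metis nonneg_int_cases not_less)
    have "prob ((\<lambda>\<omega>. (X \<omega>, Y \<omega>)) -` ({a} \<times> {i}) \<inter> space M) =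
      prob (X -` {a} \<inter> space M) * prob (Y -` {i} \<inter> space M)"
      by (rule indep_varD[OF ind]) auto
    moreover have "(\<lambda>\<omega>. (X \<omega>, Y \<omega>)) -` ({a} \<times> {i}) \<inter> space M = A i"
      using a by (auto simp: A_def)
    ultimately show ?thesis
      using a by (simp add: f_def vimage_def Int_def conj_commute)
  qed
  ultimately have "(f \<circ> int) sums prob {\<omega>\<in>space M. int (X \<omega>) - int (Y \<omega>) = c}"
    by (simp add: comp_def)
  then have "(f \<circ> int has_sum prob {\<omega>\<in>space M. int (X \<omega>) - int (Y \<omega>) = c}) UNIV"
    by (rule sums_nonneg_imp_has_sum) (simp add: f_def)
  then have "(f has_sum prob {\<omega>\<in>space M. int (X \<omega>) - int (Y \<omega>) = c}) (range int)"
    by (simp only: has_sum_reindex[OF inj_of_nat])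
  moreover have "f m = 0" if "m \<notin> range int" for m
  proof -
    have "m < 0"
      using that by (metis nonneg_int_cases not_le range_eqI)
    then have "{\<omega>\<in>space M. int (Y \<omega>) = m} = {}"
      by auto
    then show ?thesis
      by (simp only: f_def measure_empty mult_zero_right)
  qed
  ultimately have "(f has_sum prob {\<omega>\<in>space M. int (X \<omega>) - int (Y \<omega>) = c}) UNIV"
    using has_sum_cong_neutral[of UNIV "range int" f f] by blast
  then show ?thesis
    unfolding f_def[abs_def] .
qed

lemma has_sum_sum:
  fixes f :: "'i \<Rightarrow> 'b \<Rightarrow> real"
  assumes "finite I" and "\<And>i. i \<in> I \<Longrightarrow> (f i has_sum s i) A"
  shows "((\<lambda>x. \<Sum>i\<in>I. f i x) has_sum (\<Sum>i\<in>I. s i)) A"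
  using assms by (induction I rule: finite_induct) (auto intro!: has_sum_add)

lemma has_sum_diff:
  fixes f g :: "'b \<Rightarrow> real"
  assumes "(f has_sum a) A" and "(g has_sum b) A"
  shows "((\<lambda>x. f x - g x) has_sum (a - b)) A"
proof -
  have "((\<lambda>x. - g x) has_sum (- b)) A"
    using assms(2) by (simp add: has_sum_uminus)
  from has_sum_add[OF assms(1) this] show ?thesis
    by simp
qed

lemma difference_distribution_recursion:
  fixes q1 q2 p :: "int \<Rightarrow> real" and L T :: "nat \<Rightarrow> real"
  assumes "finite J"
    and rec1: "\<And>m. of_int m * q1 m = (\<Sum>j\<in>J. real j * L j * q1 (m - int j))"
    and rec2: "\<And>m. of_int m * q2 m = (\<Sum>j\<in>J. real j * T j * q2 (m - int j))"
    and corr: "\<And>c. ((\<lambda>m. q1 (c + m) * q2 m) has_sum p c) UNIV"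
  shows "of_int n * p n = (\<Sum>j\<in>J. real j * L j * p (n - int j)) - (\<Sum>j\<in>J. real j * T j * p (n + int j))"
proof -
  have split: "of_int n * (q1 (n + m) * q2 m) =
      (\<Sum>j\<in>J. real j * L j * (q1 ((n - int j) + m) * q2 m)) -
      (\<Sum>j\<in>J. real j * T j * (q1 ((n + int j) + (m - int j)) * q2 (m - int j)))" for m
  proof -
    have "of_int n * (q1 (n + m) * q2 m) = (of_int (n + m) * q1 (n + m)) * q2 m - q1 (n + m) * (of_int m * q2 m)"
      by (simp add: algebra_simps)
    also have "\<dots> = (\<Sum>j\<in>J. real j * L j * q1 (n + m - int j)) * q2 m
                   - q1 (n + m) * (\<Sum>j\<in>J. real j * T j * q2 (m - int j))"
      by (simp only: rec1 rec2)
    finally show ?thesis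
      by (simp add: sum_distrib_left sum_distrib_right algebra_simps)
  qed
  have shifted: "((\<lambda>m. q1 ((n + int j) + (m - int j)) * q2 (m - int j)) has_sum p (n + int j)) UNIV" for j
  proof -
    have "bij_betw (\<lambda>m::int. m - int j) UNIV UNIV"
      by (rule bij_betwI[where g = "\<lambda>m. m + int j"]) auto
    from has_sum_reindex_bij_betw[OF this, of "\<lambda>m. q1 ((n + int j) + m) * q2 m"] corr[of "n + int j"]
    show ?thesis
      by simp
  qed
  have "((\<lambda>m. of_int n * (q1 (n + m) * q2 m)) has_sum
          ((\<Sum>j\<in>J. real j * L j * p (n - int j)) - (\<Sum>j\<in>J. real j * T j * p (n + int j)))) UNIV"
    unfolding split using \<open>finite J\<close>
    by (intro has_sum_diff has_sum_sum has_sum_cmult_right corr shifted)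
  moreover have "((\<lambda>m. of_int n * (q1 (n + m) * q2 m)) has_sum (of_int n * p n)) UNIV"
    by (intro has_sum_cmult_right corr)
  ultimately show ?thesis
    using has_sum_unique by blast
qed

theorem theorem3p4:
  fixes M :: "'a measure" and k :: nat
    and lam gam :: "nat \<Rightarrow> real \<Rightarrow> real"
    and M1 M2 :: "real \<Rightarrow> 'a \<Rightarrow> nat"
    and t :: real and n :: int
  assumes "prob_space M"
    and lam_nonneg: "\<And>j x. j \<in> {1..k} \<Longrightarrow> 0 \<le> x \<Longrightarrow> 0 \<le> lam j x"
    and gam_nonneg: "\<And>j x. j \<in> {1..k} \<Longrightarrow> 0 \<le> x \<Longrightarrow> 0 \<le> gam j x"
    and lam_int: "\<And>j a. j \<in> {1..k} \<Longrightarrow> lam j integrable_on {0..a}"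
    and gam_int: "\<And>j a. j \<in> {1..k} \<Longrightarrow> gam j integrable_on {0..a}"
    and M1: "NGCP M k lam M1"
    and M2: "NGCP M k gam M2"
    and indep: "prob_space.indep_var M
        (Pi\<^sub>M {0..} (\<lambda>_. count_space UNIV)) (\<lambda>\<omega>. \<lambda>s\<in>{0..}. M1 s \<omega>)
        (Pi\<^sub>M {0..} (\<lambda>_. count_space UNIV)) (\<lambda>\<omega>. \<lambda>s\<in>{0..}. M2 s \<omega>)"
    and "0 \<le> t" and "1 \<le> n"
  shows "(let p = (\<lambda>m. measure M {\<omega> \<in> space M. int (M1 t \<omega>) - int (M2 t \<omega>) = m})
          in p n = 1 / of_int n * (\<Sum>j=1..k. real j *
               (cumint (lam j) t * p (n - int j) - cumint (gam j) t * p (n + int j))))"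
proof -
  interpret prob_space M by fact
  define p where "p m = prob {\<omega> \<in> space M. int (M1 t \<omega>) - int (M2 t \<omega>) = m}" for m
  have "indep_var (count_space UNIV) (M1 t) (count_space UNIV) (M2 t)"
    using indep_var_eval[OF indep] \<open>0 \<le> t\<close> by simp
  note corr = indep_var_diff_has_sum[OF this, folded p_def]
  have "of_int n * p n = (\<Sum>j=1..k. real j * cumint (lam j) t * p (n - int j))
                       - (\<Sum>j=1..k. real j * cumint (gam j) t * p (n + int j))"
    by (rule difference_distribution_recursion[OF _
          NGCP_distribution_recursion[OF \<open>prob_space M\<close> M1 \<open>0 \<le> t\<close>]
          NGCP_distribution_recursion[OF \<open>prob_space M\<close> M2 \<open>0 \<le> t\<close>] corr]) simp
  moreover have "of_int n \<noteq> (0::real)"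
    using \<open>1 \<le> n\<close> by simp
  ultimately have "p n = 1 / of_int n * (\<Sum>j=1..k. real j *
                      (cumint (lam j) t * p (n - int j) - cumint (gam j) t * p (n + int j)))"
    by (simp add: field_simps sum_subtractf right_diff_distrib mult_ac)
  then show ?thesis
    by (simp add: p_def[abs_def] Let_def)
qed

end
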